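(* Let $L$ be a full-rank lattice in $\mathbb{R}^n$ and $L_0\subseteq L$ a full-rank sublattice. Assume $b_0>2\nu(L_0)$ and let $\lambda$ be drawn uniformly at random from $L\cap[0,b_0)^n$. Then the total variation distance between the distribution of $\lambda+L_0$ on the quotient group $L/L_0$ and the uniform distribution on $L/L_0$ is at most $$1-\frac{(b_0-2\nu(L_0))^n}{(b_0+2\nu(L))^n}.$$
   Context: $\nu(\cdot)$ denotes the covering radius of a lattice with respect to the Euclidean norm. *)

theory Defs
  imports "HOL-Analysis.Analysis" "HOL-Probability.Probability"
begin

definition full_rank_lattice :: "(real ^ 'n) set \<Rightarrow> bool" where
  "full_rank_lattice L \<longleftrightarrow>
     (\<exists>B :: 'n \<Rightarrow> real ^ 'n. inj B \<and> independent (range B) \<and>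
        L = range (\<lambda>c :: 'n \<Rightarrow> int. \<Sum>i\<in>UNIV. of_int (c i) *\<^sub>R B i))"

definition covering_radius :: "(real ^ 'n) set \<Rightarrow> real" where
  "covering_radius L = (SUP x. infdist x L)"

definition coset_of :: "(real ^ 'n) set \<Rightarrow> real ^ 'n \<Rightarrow> (real ^ 'n) set" where
  "coset_of L0 x = (\<lambda>y. x + y) ` L0"

definition quotient_cosets :: "(real ^ 'n) set \<Rightarrow> (real ^ 'n) set \<Rightarrow> (real ^ 'n) set set" where
  "quotient_cosets L L0 = coset_of L0 ` L"

definition tv_dist :: "'a pmf \<Rightarrow> 'a pmf \<Rightarrow> real" where
  "tv_dist p q = (SUP A. \<bar>measure_pmf.prob p A - measure_pmf.prob q A\<bar>)"

definition half_open_box :: "real \<Rightarrow> (real ^ 'n) set" where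
  "half_open_box b = {x. \<forall>i. 0 \<le> x $ i \<and> x $ i < b}"

end

theory Submission
  imports Defs
begin

text \<open>
  Let \<open>v\<close> be the covolume of \<open>L\<close>. Cutting a fundamental parallelepiped into pieces and moving
  each piece by a nearest lattice vector gives a fundamental domain \<open>W \<subseteq> cball 0 \<nu>(L)\<close> of
  volume \<open>v\<close>; in the same way \<open>L0\<close> has a fundamental domain \<open>W0 \<subseteq> cball 0 \<nu>(L0)\<close> of volume
  \<open>k v\<close>, where \<open>k = [L : L0]\<close>. The disjoint translates \<open>z + W\<close>, \<open>z \<in> L \<inter> [0,b0)\<^sup>n\<close>, lie in a cube
  of side \<open>b0 + 2\<nu>(L)\<close>, so there are at most \<open>(b0 + 2\<nu>(L))\<^sup>n / v\<close> sample points. Conversely,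
  for each coset \<open>a + L0\<close> the translates \<open>z + W0\<close> with \<open>z \<in> (a + L0) \<inter> [0,b0)\<^sup>n\<close> cover the
  open cube of side \<open>b0 - 2\<nu>(L0)\<close> centred in the box, so the coset contains at least
  \<open>(b0 - 2\<nu>(L0))\<^sup>n / (k v)\<close> sample points. Hence every coset receives probability at least
  \<open>r / k\<close>, with \<open>r\<close> the ratio in the statement, and a distribution on \<open>k\<close> points that
  dominates \<open>r\<close> times the uniform one is within total variation distance \<open>1 - r\<close> of uniform.
\<close>

section \<open>Additive subgroups and cosets\<close>

definition additive_subgroup :: "'a::ab_group_add set \<Rightarrow> bool" where
  "additive_subgroup G \<longleftrightarrow> 0 \<in> G \<and> (\<forall>a\<in>G. \<forall>b\<in>G. a + b \<in> G) \<and> (\<forall>a\<in>G. - a \<in> G)"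

lemma
  assumes "additive_subgroup G"
  shows additive_subgroup_zero: "0 \<in> G"
    and additive_subgroup_add: "a \<in> G \<Longrightarrow> b \<in> G \<Longrightarrow> a + b \<in> G"
    and additive_subgroup_uminus: "a \<in> G \<Longrightarrow> - a \<in> G"
    and additive_subgroup_diff: "a \<in> G \<Longrightarrow> b \<in> G \<Longrightarrow> a - b \<in> G"
  using assms unfolding additive_subgroup_def by (metis diff_conv_add_uminus)+

lemma mem_coset_of_iff: "x \<in> coset_of \<Lambda> a \<longleftrightarrow> x - a \<in> \<Lambda>"
  unfolding coset_of_def image_iff by (metis add.commute add_diff_cancel_left' diff_add_cancel)

lemma coset_of_eq_iff:
  assumes "additive_subgroup \<Lambda>"
  shows "coset_of \<Lambda> a = coset_of \<Lambda> b \<longleftrightarrow> a - b \<in> \<Lambda>"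
proof
  assume "coset_of \<Lambda> a = coset_of \<Lambda> b"
  moreover have "a \<in> coset_of \<Lambda> a"
    using additive_subgroup_zero[OF assms] by (simp add: mem_coset_of_iff)
  ultimately show "a - b \<in> \<Lambda>" by (simp add: mem_coset_of_iff)
next
  assume ab: "a - b \<in> \<Lambda>"
  have "x - a \<in> \<Lambda> \<longleftrightarrow> x - b \<in> \<Lambda>" for x
    using additive_subgroup_add[OF assms _ ab, of "x - a"] additive_subgroup_diff[OF assms _ ab, of "x - b"]
    by auto
  then show "coset_of \<Lambda> a = coset_of \<Lambda> b" by (auto simp: mem_coset_of_iff)
qed

section \<open>Fundamental domains\<close>

lemma emeasure_lebesgue_translation:
  "emeasure lebesgue ((+) a ` S) = emeasure lebesgue (S :: 'a::euclidean_space set)"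
  using emeasure_lebesgue_affine[of 1 a S] by (simp add: add.commute)

definition fundamental_domain :: "'a::euclidean_space set \<Rightarrow> 'a set \<Rightarrow> bool" where
  "fundamental_domain \<Lambda> D \<longleftrightarrow> D \<in> sets lebesgue \<and> (\<forall>y. \<exists>d\<in>D. \<exists>\<mu>\<in>\<Lambda>. y = d + \<mu>) \<and>
     (\<forall>d d' \<mu> \<mu>'. d \<in> D \<longrightarrow> d' \<in> D \<longrightarrow> \<mu> \<in> \<Lambda> \<longrightarrow> \<mu>' \<in> \<Lambda> \<longrightarrow> d + \<mu> = d' + \<mu>' \<longrightarrow> d = d')"

lemma
  assumes "fundamental_domain \<Lambda> D"
  shows fundamental_domain_sets: "D \<in> sets lebesgue"
    and fundamental_domain_cover: "\<exists>d\<in>D. \<exists>\<mu>\<in>\<Lambda>. y = d + \<mu>"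
    and fundamental_domain_unique:
      "d \<in> D \<Longrightarrow> d' \<in> D \<Longrightarrow> \<mu> \<in> \<Lambda> \<Longrightarrow> \<mu>' \<in> \<Lambda> \<Longrightarrow> d + \<mu> = d' + \<mu>' \<Longrightarrow> d = d'"
  using assms unfolding fundamental_domain_def by blast+

lemma disjoint_family_on_translates_fundamental_domain:
  assumes "fundamental_domain \<Lambda> D"
  shows "disjoint_family_on (\<lambda>z. (+) z ` D) \<Lambda>"
  unfolding disjoint_family_on_def
proof (intro ballI impI)
  fix z z' assume z: "z \<in> \<Lambda>" "z' \<in> \<Lambda>" "z \<noteq> z'"
  show "(+) z ` D \<inter> (+) z' ` D = {}"
  proof (rule ccontr)
    assume "(+) z ` D \<inter> (+) z' ` D \<noteq> {}"
    then obtain d d' where "d \<in> D" "d' \<in> D" "z + d = z' + d'" by auto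
    with fundamental_domain_unique[OF assms, of d d' z z'] z show False by (simp add: add.commute)
  qed
qed

lemma emeasure_translates_fundamental_domain:
  assumes "fundamental_domain \<Lambda> D" and "finite F" and "F \<subseteq> \<Lambda>"
  shows "emeasure lebesgue (\<Union>z\<in>F. (+) z ` D) = of_nat (card F) * emeasure lebesgue D"
proof -
  have "emeasure lebesgue (\<Union>z\<in>F. (+) z ` D) = (\<Sum>z\<in>F. emeasure lebesgue ((+) z ` D))"
    using assms disjoint_family_on_mono[OF _ disjoint_family_on_translates_fundamental_domain]
    by (intro sum_emeasure[symmetric]) (auto intro: lebesgue_sets_translation fundamental_domain_sets)
  then show ?thesis by (simp add: emeasure_lebesgue_translation)
qed

lemma emeasure_le_card_mult_translates:
  assumes "S \<subseteq> (\<Union>z\<in>F. (+) z ` D)" and "finite F" and "D \<in> sets lebesgue"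
  shows "emeasure lebesgue S \<le> of_nat (card F) * emeasure lebesgue D"
proof -
  have "emeasure lebesgue S \<le> emeasure lebesgue (\<Union>z\<in>F. (+) z ` D)"
    using assms by (intro emeasure_mono) (auto intro: lebesgue_sets_translation)
  also have "\<dots> \<le> (\<Sum>z\<in>F. emeasure lebesgue ((+) z ` D))"
    using assms by (intro emeasure_subadditive_finite) (auto intro: lebesgue_sets_translation)
  finally show ?thesis by (simp add: emeasure_lebesgue_translation)
qed

lemma emeasure_fundamental_domain_pos:
  assumes "fundamental_domain \<Lambda> D" and "countable \<Lambda>"
  shows "0 < emeasure lebesgue D"
proof (rule ccontr)
  assume "\<not> 0 < emeasure lebesgue D"
  then have "(+) \<mu> ` D \<in> null_sets lebesgue" for \<mu>
    using fundamental_domain_sets[OF assms(1)]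
    by (simp add: null_sets_def lebesgue_sets_translation emeasure_lebesgue_translation)
  then have "(\<Union>\<mu>\<in>\<Lambda>. (+) \<mu> ` D) \<in> null_sets lebesgue"
    using assms(2) by (intro null_sets_UN') auto
  moreover have "(\<Union>\<mu>\<in>\<Lambda>. (+) \<mu> ` D) = UNIV"
    using fundamental_domain_cover[OF assms(1)] by (force simp: add.commute)
  ultimately have "emeasure lebesgue (UNIV :: 'a set) = 0" by auto
  then show False using emeasure_lborel_UNIV[where 'a='a] by simp
qed

context
  fixes \<Lambda> D :: "'a::euclidean_space set" and P :: "nat \<Rightarrow> 'a set" and s :: "nat \<Rightarrow> 'a"
  assumes D: "fundamental_domain \<Lambda> D" and G: "additive_subgroup \<Lambda>"
    and disj: "disjoint_family P" and P_union: "(\<Union>j. P j) = D" and P_sets: "\<And>j. P j \<in> sets lebesgue"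
    and s: "\<And>j. s j \<in> \<Lambda>"
begin

lemma piecewise_translation_same_piece:
  assumes "x \<in> P i" "x' \<in> P j" "x + (s i + \<mu>) = x' + (s j + \<mu>')" "\<mu> \<in> \<Lambda>" "\<mu>' \<in> \<Lambda>"
  shows "i = j \<and> x = x'"
proof -
  have "x \<in> D" "x' \<in> D" using assms(1,2) P_union by blast+
  then have "x = x'"
    using fundamental_domain_unique[OF D _ _ _ _ assms(3)]
      additive_subgroup_add[OF G s assms(4)] additive_subgroup_add[OF G s assms(5)] by blast
  with assms(1,2) disj show ?thesis by (auto simp: disjoint_family_on_def)
qed

lemma fundamental_domain_piecewise_translation: "fundamental_domain \<Lambda> (\<Union>j. (+) (s j) ` P j)"
  unfolding fundamental_domain_def
proof (intro conjI allI impI)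
  show "(\<Union>j. (+) (s j) ` P j) \<in> sets lebesgue"
    using P_sets lebesgue_sets_translation by blast
next
  fix y
  obtain d \<mu> j where "d \<in> P j" "\<mu> \<in> \<Lambda>" "y = d + \<mu>"
    using fundamental_domain_cover[OF D] P_union by blast
  moreover have "\<mu> - s j \<in> \<Lambda>" using additive_subgroup_diff[OF G \<open>\<mu> \<in> \<Lambda>\<close> s] .
  ultimately show "\<exists>w\<in>\<Union>j. (+) (s j) ` P j. \<exists>\<mu>\<in>\<Lambda>. y = w + \<mu>"
    by (intro bexI[of _ "s j + d"] bexI[of _ "\<mu> - s j"]) auto
next
  fix w w' \<mu> \<mu>'
  assume "w \<in> (\<Union>j. (+) (s j) ` P j)" "w' \<in> (\<Union>j. (+) (s j) ` P j)" "\<mu> \<in> \<Lambda>" "\<mu>' \<in> \<Lambda>"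
    and eq: "w + \<mu> = w' + \<mu>'"
  then obtain i j x x' where "x \<in> P i" "x' \<in> P j" "w = s i + x" "w' = s j + x'" by blast
  with piecewise_translation_same_piece[of x i x' j \<mu> \<mu>'] eq \<open>\<mu> \<in> \<Lambda>\<close> \<open>\<mu>' \<in> \<Lambda>\<close>
  show "w = w'" by (simp add: ac_simps)
qed

lemma emeasure_piecewise_translation:
  "emeasure lebesgue (\<Union>j. (+) (s j) ` P j) = emeasure lebesgue D"
proof -
  have "disjoint_family (\<lambda>j. (+) (s j) ` P j)"
    unfolding disjoint_family_on_def
  proof (intro ballI impI equals0I)
    fix i j w assume "i \<noteq> j" and "w \<in> (+) (s i) ` P i \<inter> (+) (s j) ` P j"
    then obtain x x' where "x \<in> P i" "x' \<in> P j" "s i + x = s j + x'" by blast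
    with piecewise_translation_same_piece[of x i x' j 0 0] additive_subgroup_zero[OF G] \<open>i \<noteq> j\<close>
    show False by (simp add: add.commute)
  qed
  moreover have "(+) (s j) ` P j \<in> sets lebesgue" for j
    using P_sets by (rule lebesgue_sets_translation)
  ultimately have "emeasure lebesgue (\<Union>j. (+) (s j) ` P j) = (\<Sum>j. emeasure lebesgue (P j))"
    by (simp add: suminf_emeasure[symmetric] image_subset_iff emeasure_lebesgue_translation)
  also have "\<dots> = emeasure lebesgue (\<Union>j. P j)"
    by (rule suminf_emeasure) (use P_sets disj in auto)
  finally show ?thesis by (simp only: P_union)
qed

end

lemma fundamental_domain_in_cball:
  fixes \<Lambda> D :: "'a::euclidean_space set"
  assumes D: "fundamental_domain \<Lambda> D" and G: "additive_subgroup \<Lambda>" and "countable \<Lambda>"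
    and near: "\<And>x. \<exists>\<mu>\<in>\<Lambda>. dist x \<mu> \<le> \<rho>"
  obtains W where "fundamental_domain \<Lambda> W" "W \<subseteq> cball 0 \<rho>"
    "emeasure lebesgue W = emeasure lebesgue D"
proof -
  define g where "g = from_nat_into \<Lambda>"
  have "\<Lambda> \<noteq> {}" using near by blast
  then have g: "g j \<in> \<Lambda>" "range g = \<Lambda>" for j
    unfolding g_def using \<open>countable \<Lambda>\<close> by (simp_all add: from_nat_into range_from_nat_into)
  text \<open>Piece \<open>j\<close> collects the points of \<open>D\<close> whose first lattice vector within distance \<open>\<rho>\<close>
    in the enumeration \<open>g\<close> is \<open>g j\<close>; it is then moved by \<open>- g j\<close>.\<close>
  define P where "P j = D \<inter> disjointed (\<lambda>j. cball (g j) \<rho>) j" for j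
  have disj: "disjoint_family P"
    using disjoint_family_disjointed[of "\<lambda>j. cball (g j) \<rho>"]
    unfolding P_def disjoint_family_on_def by auto
  have union: "(\<Union>j. P j) = D"
  proof -
    have "(\<Union>j. cball (g j) \<rho>) = UNIV"
      using near g(2) by (auto simp: dist_commute)
    then show ?thesis unfolding P_def using UN_disjointed_eq[of "\<lambda>j. cball (g j) \<rho>"] by blast
  qed
  have sets: "P j \<in> sets lebesgue" for j
    using sets.range_disjointed_sets[of "\<lambda>j. cball (g j) \<rho>" lebesgue]
      fmeasurableD[OF lmeasurable_cball] fundamental_domain_sets[OF D]
    unfolding P_def by (simp add: image_subset_iff)
  have shifts: "- g j \<in> \<Lambda>" for j
    using additive_subgroup_uminus[OF G g(1)] .
  have sub: "(\<Union>j. (+) (- g j) ` P j) \<subseteq> cball 0 \<rho>"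
  proof clarify
    fix j x assume "x \<in> P j"
    then have "dist (g j) x \<le> \<rho>" using disjointed_subset[of "\<lambda>j. cball (g j) \<rho>" j] by (auto simp: P_def)
    then show "- g j + x \<in> cball 0 \<rho>" by (simp add: dist_norm norm_minus_commute)
  qed
  show ?thesis
    using fundamental_domain_piecewise_translation[OF D G disj union sets shifts]
      sub emeasure_piecewise_translation[OF D G disj union sets shifts] by (rule that)
qed

lemma emeasure_bounded_fundamental_domain:
  assumes D: "fundamental_domain \<Lambda> D" and "countable \<Lambda>" and "bounded D"
  shows "emeasure lebesgue D = ennreal (measure lebesgue D)" and "0 < measure lebesgue D"
proof -
  have "D \<in> lmeasurable"
    using \<open>bounded D\<close> fundamental_domain_sets[OF D] by (rule bounded_set_imp_lmeasurable)
  then show "emeasure lebesgue D = ennreal (measure lebesgue D)"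
    by (simp add: emeasure_eq_measure2)
  with emeasure_fundamental_domain_pos[OF D \<open>countable \<Lambda>\<close>] show "0 < measure lebesgue D"
    by simp
qed

lemma finite_inter_bounded_fundamental_domain:
  fixes \<Lambda> D S :: "'a::euclidean_space set"
  assumes D: "fundamental_domain \<Lambda> D" and "countable \<Lambda>" and "bounded D" and "bounded S"
  shows "finite (\<Lambda> \<inter> S)"
proof -
  obtain r r' where S: "S \<subseteq> cball 0 r" and D_ball: "D \<subseteq> cball 0 r'"
    using \<open>bounded D\<close> \<open>bounded S\<close> unfolding bounded_iff by (auto simp: subset_iff)
  define e where "e = measure lebesgue D"
  note e = emeasure_bounded_fundamental_domain[OF assms(1-3), folded e_def]
  define m where "m = measure lebesgue (cball (0::'a) (r + r'))"
  have "card F \<le> nat \<lceil>m / e\<rceil>" if F: "F \<subseteq> \<Lambda> \<inter> S" "finite F" for F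
  proof -
    have "(\<Union>z\<in>F. (+) z ` D) \<subseteq> cball 0 (r + r')"
      using F S D_ball by (force intro: norm_triangle_le)
    then have "emeasure lebesgue (\<Union>z\<in>F. (+) z ` D) \<le> emeasure lebesgue (cball (0::'a) (r + r'))"
      by (intro emeasure_mono) auto
    then have "ennreal (real (card F) * e) \<le> ennreal m"
      using emeasure_translates_fundamental_domain[OF D \<open>finite F\<close>] F e
      by (simp add: m_def emeasure_eq_measure2 ennreal_mult'' ennreal_of_nat_eq_real_of_nat)
    then have "real (card F) \<le> m / e"
      using e(2) by (simp add: m_def le_divide_eq)
    then show ?thesis by linarith
  qed
  then show ?thesis using finite_if_finite_subsets_card_bdd by blast
qed

lemma fundamental_domain_linear_image:
  fixes T :: "'a::euclidean_space \<Rightarrow> 'a"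
  assumes D: "fundamental_domain \<Lambda> D" and "D \<in> sets borel" and "linear T" and "inj T"
  shows "fundamental_domain (T ` \<Lambda>) (T ` D)"
  unfolding fundamental_domain_def
proof (intro conjI allI impI)
  have "bij T" using linear_inj_imp_surj[OF \<open>linear T\<close> \<open>inj T\<close>] \<open>inj T\<close> by (rule bijI[rotated])
  then have "T ` D = inv T -` D"
    by (metis bij_imp_bij_inv bij_vimage_eq_inv_image inv_inv_eq)
  moreover have "inv T \<in> borel_measurable borel"
    using inj_linear_imp_inv_linear[OF \<open>linear T\<close> \<open>inj T\<close>]
    by (intro borel_measurable_continuous_onI linear_continuous_on) (simp add: linear_conv_bounded_linear)
  ultimately show "T ` D \<in> sets lebesgue"
    using \<open>D \<in> sets borel\<close> by (simp add: measurable_sets_borel)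
next
  fix y
  obtain d \<mu> where "d \<in> D" "\<mu> \<in> \<Lambda>" "inv T y = d + \<mu>"
    using fundamental_domain_cover[OF D] by blast
  moreover have "y = T (inv T y)"
    using linear_inj_imp_surj[OF \<open>linear T\<close> \<open>inj T\<close>] by (simp add: surj_f_inv_f)
  ultimately show "\<exists>w\<in>T ` D. \<exists>\<nu>\<in>T ` \<Lambda>. y = w + \<nu>"
    using linear_add[OF \<open>linear T\<close>] by auto
next
  fix w w' \<nu> \<nu>' assume "w \<in> T ` D" "w' \<in> T ` D" "\<nu> \<in> T ` \<Lambda>" "\<nu>' \<in> T ` \<Lambda>" "w + \<nu> = w' + \<nu>'"
  then obtain d d' \<mu> \<mu>' where "d \<in> D" "d' \<in> D" "\<mu> \<in> \<Lambda>" "\<mu>' \<in> \<Lambda>" "T (d + \<mu>) = T (d' + \<mu>')"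
    and "w = T d" "w' = T d'"
    using linear_add[OF \<open>linear T\<close>] by auto
  with fundamental_domain_unique[OF D] \<open>inj T\<close> show "w = w'" by (metis injD)
qed

section \<open>Full-rank lattices\<close>

definition integer_lattice :: "(real ^ 'n) set" where
  "integer_lattice = {t. \<forall>i. t $ i \<in> \<int>}"

lemma additive_subgroup_integer_lattice: "additive_subgroup integer_lattice"
  by (simp add: additive_subgroup_def integer_lattice_def)

lemma integer_lattice_eq_range: "integer_lattice = range (\<lambda>c :: 'n::finite \<Rightarrow> int. \<chi> i. of_int (c i))"
proof (intro equalityI subsetI)
  fix t :: "real ^ 'n" assume "t \<in> integer_lattice"
  then have "t = (\<chi> i. of_int \<lfloor>t $ i\<rfloor>)"
    by (simp add: integer_lattice_def vec_eq_iff)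
  then show "t \<in> range (\<lambda>c :: 'n \<Rightarrow> int. \<chi> i. of_int (c i))"
    using rangeI[of "\<lambda>c :: 'n \<Rightarrow> int. \<chi> i. of_int (c i)" "\<lambda>i. \<lfloor>t $ i\<rfloor>"] by simp
qed (auto simp: integer_lattice_def)

lemma countable_integer_lattice: "countable integer_lattice"
  by (simp add: integer_lattice_eq_range)

lemma closed_integer_lattice: "closed integer_lattice"
proof -
  have "integer_lattice = (\<Inter>i. (\<lambda>t. t $ i) -` \<int>)"
    by (auto simp: integer_lattice_def)
  moreover have "closed ((\<lambda>t :: real ^ 'n. t $ i) -` \<int>)" for i
    by (rule continuous_closed_vimage) (auto intro: continuous_intros)
  ultimately show ?thesis by (metis closed_INT)
qed

lemma half_open_box_sets_borel: "half_open_box b \<in> sets borel"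
  unfolding half_open_box_def by measurable

lemma bounded_half_open_box: "bounded (half_open_box b)"
  by (rule bounded_subset[of "cbox 0 (\<chi> i. b)"]) (auto simp: half_open_box_def mem_box_cart less_imp_le)

lemma fundamental_domain_integer_lattice: "fundamental_domain integer_lattice (half_open_box 1)"
  unfolding fundamental_domain_def
proof (intro conjI allI impI)
  show "half_open_box 1 \<in> sets lebesgue"
    using half_open_box_sets_borel by (metis sets_completionI_sets sets_lborel)
next
  fix y :: "real ^ 'n"
  have "y = (\<chi> i. frac (y $ i)) + (\<chi> i. of_int \<lfloor>y $ i\<rfloor>)"
    by (simp add: vec_eq_iff frac_def)
  moreover have "(\<chi> i. frac (y $ i)) \<in> half_open_box 1"
    by (simp add: half_open_box_def frac_lt_1)
  moreover have "(\<chi> i. of_int \<lfloor>y $ i\<rfloor>) \<in> integer_lattice"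
    by (simp add: integer_lattice_def)
  ultimately show "\<exists>d\<in>half_open_box 1. \<exists>\<mu>\<in>integer_lattice. y = d + \<mu>" by blast
next
  fix d d' \<mu> \<mu>' :: "real ^ 'n"
  assume box: "d \<in> half_open_box 1" "d' \<in> half_open_box 1"
    and int: "\<mu> \<in> integer_lattice" "\<mu>' \<in> integer_lattice" and eq: "d + \<mu> = d' + \<mu>'"
  have "frac ((d + \<mu>) $ i) = d $ i" "frac ((d' + \<mu>') $ i) = d' $ i" for i
    using box int by (auto simp: frac_unique_iff half_open_box_def integer_lattice_def)
  with eq show "d = d'" by (simp add: vec_eq_iff)
qed

lemma additive_subgroup_linear_image:
  assumes "additive_subgroup G" and "linear T"
  shows "additive_subgroup (T ` G)"
  unfolding additive_subgroup_def
proof (intro conjI ballI)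
  show "0 \<in> T ` G"
    using additive_subgroup_zero[OF assms(1)] linear_0[OF assms(2)] by (metis image_eqI)
next
  fix a b assume "a \<in> T ` G" "b \<in> T ` G"
  then obtain x y where "x \<in> G" "y \<in> G" "a = T x" "b = T y" by blast
  then show "a + b \<in> T ` G"
    using additive_subgroup_add[OF assms(1)] linear_add[OF assms(2)] by (metis image_eqI)
next
  fix a assume "a \<in> T ` G"
  then obtain x where "x \<in> G" "a = T x" by blast
  then show "- a \<in> T ` G"
    using additive_subgroup_uminus[OF assms(1)] linear_neg[OF assms(2)] by (metis image_eqI)
qed

lemma full_rank_lattice_linear_image:
  fixes L :: "(real ^ 'n) set"
  assumes "full_rank_lattice L"
  obtains T :: "real ^ 'n \<Rightarrow> real ^ 'n" where "linear T" "inj T" "L = T ` integer_lattice"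
proof -
  obtain B :: "'n \<Rightarrow> real ^ 'n" where B: "inj B" "independent (range B)"
    and L: "L = range (\<lambda>c :: 'n \<Rightarrow> int. \<Sum>i\<in>UNIV. of_int (c i) *\<^sub>R B i)"
    using assms unfolding full_rank_lattice_def by blast
  define T where "T t = (\<Sum>i\<in>UNIV. (t $ i) *\<^sub>R B i)" for t :: "real ^ 'n"
  have "linear T"
    unfolding linear_iff T_def by (simp add: algebra_simps sum.distrib scaleR_sum_right)
  moreover have "inj T"
    unfolding linear_injective_0[OF \<open>linear T\<close>]
  proof (intro allI impI)
    fix t assume "T t = 0"
    have "(\<Sum>v\<in>range B. t $ inv B v *\<^sub>R v) = T t"
      using sum.reindex[OF B(1), of "\<lambda>v. t $ inv B v *\<^sub>R v"] B(1) by (simp add: T_def)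
    then have "\<forall>v\<in>range B. t $ inv B v = 0"
      using \<open>T t = 0\<close> B(2) unfolding independent_explicit by auto
    then show "t = 0" using B(1) by (simp add: vec_eq_iff)
  qed
  moreover have "L = T ` integer_lattice"
    unfolding L integer_lattice_eq_range image_image T_def by simp
  ultimately show ?thesis by (rule that)
qed

lemma
  fixes L :: "(real ^ 'n) set"
  assumes "full_rank_lattice L"
  shows full_rank_lattice_additive_subgroup: "additive_subgroup L"
    and countable_full_rank_lattice: "countable L"
    and closed_full_rank_lattice: "closed L"
    and full_rank_lattice_bounded_fundamental_domain: "\<exists>P. fundamental_domain L P \<and> bounded P"
proof -
  obtain T :: "real ^ 'n \<Rightarrow> real ^ 'n" where T: "linear T" "inj T" and L: "L = T ` integer_lattice"
    by (rule full_rank_lattice_linear_image[OF assms])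
  show "additive_subgroup L"
    unfolding L using additive_subgroup_integer_lattice T(1) by (rule additive_subgroup_linear_image)
  show "countable L"
    unfolding L using countable_integer_lattice by (rule countable_image)
  show "closed L"
    unfolding L using closed_integer_lattice T by (rule closed_injective_linear_image)
  have "bounded (T ` half_open_box 1)"
    using bounded_linear_image[OF bounded_half_open_box] T(1) by (simp add: linear_conv_bounded_linear)
  with fundamental_domain_linear_image[OF fundamental_domain_integer_lattice half_open_box_sets_borel T]
  show "\<exists>P. fundamental_domain L P \<and> bounded P" unfolding L by blast
qed

lemma infdist_le_covering_radius:
  fixes L :: "(real ^ 'n) set"
  assumes "full_rank_lattice L"
  shows "infdist x L \<le> covering_radius L"
proof -
  obtain P where P: "fundamental_domain L P" "bounded P"
    using full_rank_lattice_bounded_fundamental_domain[OF assms] by blast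
  then obtain R where R: "\<forall>p\<in>P. norm p \<le> R" by (auto simp: bounded_iff)
  have "infdist y L \<le> R" for y
  proof -
    obtain d \<mu> where "d \<in> P" "\<mu> \<in> L" "y = d + \<mu>"
      using fundamental_domain_cover[OF P(1)] by blast
    then have "infdist y L \<le> norm d" using infdist_le[of \<mu> L y] by (simp add: dist_norm)
    with R \<open>d \<in> P\<close> show ?thesis by force
  qed
  then have "bdd_above (range (\<lambda>y. infdist y L))" by (intro bdd_aboveI2)
  then show ?thesis unfolding covering_radius_def by (rule cSUP_upper[OF UNIV_I])
qed

lemma covering_radius_nonneg: "full_rank_lattice L \<Longrightarrow> 0 \<le> covering_radius L"
  using infdist_le_covering_radius infdist_nonneg order_trans by blast

lemma covering_radius_nearest:
  fixes L :: "(real ^ 'n) set"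
  assumes "full_rank_lattice L"
  shows "\<exists>\<mu>\<in>L. dist x \<mu> \<le> covering_radius L"
proof -
  have "L \<noteq> {}"
    using additive_subgroup_zero[OF full_rank_lattice_additive_subgroup[OF assms]] by blast
  then obtain \<mu> where "\<mu> \<in> L" "infdist x L = dist x \<mu>"
    using infdist_attains_inf[OF closed_full_rank_lattice[OF assms]] by blast
  with infdist_le_covering_radius[OF assms, of x] show ?thesis by auto
qed

lemma finite_full_rank_lattice_inter_bounded:
  assumes "full_rank_lattice L" and "bounded S"
  shows "finite (L \<inter> S)"
proof -
  obtain P where "fundamental_domain L P" "bounded P"
    using full_rank_lattice_bounded_fundamental_domain[OF assms(1)] by blast
  with countable_full_rank_lattice[OF assms(1)] \<open>bounded S\<close> show ?thesis
    by (intro finite_inter_bounded_fundamental_domain)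
qed

lemma full_rank_lattice_inter_half_open_box_nonempty:
  assumes "full_rank_lattice L" and "0 < b"
  shows "L \<inter> half_open_box b \<noteq> {}"
  using additive_subgroup_zero[OF full_rank_lattice_additive_subgroup[OF assms(1)]] assms(2)
  by (auto simp: half_open_box_def)

lemma finite_quotient_cosets:
  fixes L L0 :: "(real ^ 'n) set"
  assumes L: "full_rank_lattice L" and L0: "full_rank_lattice L0" and "L0 \<subseteq> L"
  shows "finite (quotient_cosets L L0)"
proof -
  note G = full_rank_lattice_additive_subgroup[OF L] and G0 = full_rank_lattice_additive_subgroup[OF L0]
  have "finite (L \<inter> cball 0 (covering_radius L0))"
    using L by (rule finite_full_rank_lattice_inter_bounded) simp
  moreover have "quotient_cosets L L0 \<subseteq> coset_of L0 ` (L \<inter> cball 0 (covering_radius L0))"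
  proof
    fix c assume "c \<in> quotient_cosets L L0"
    then obtain a where "a \<in> L" "c = coset_of L0 a" by (auto simp: quotient_cosets_def)
    moreover obtain \<mu> where "\<mu> \<in> L0" "dist a \<mu> \<le> covering_radius L0"
      using covering_radius_nearest[OF L0] by blast
    ultimately have "a - \<mu> \<in> L \<inter> cball 0 (covering_radius L0)" "c = coset_of L0 (a - \<mu>)"
      using additive_subgroup_diff[OF G] additive_subgroup_uminus[OF G0] \<open>L0 \<subseteq> L\<close>
      by (auto simp: coset_of_eq_iff[OF G0] dist_norm norm_minus_commute)
    then show "c \<in> coset_of L0 ` (L \<inter> cball 0 (covering_radius L0))" by blast
  qed
  ultimately show ?thesis by (rule finite_surj)
qed

lemma fundamental_domain_sublattice:
  fixes L L0 P R :: "(real ^ 'n) set"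
  assumes P: "fundamental_domain L P" and G: "additive_subgroup L" and G0: "additive_subgroup L0"
    and "L0 \<subseteq> L" and "R \<subseteq> L" and "finite R" and R: "bij_betw (coset_of L0) R (quotient_cosets L L0)"
  shows "fundamental_domain L0 (\<Union>r\<in>R. (+) r ` P)"
  unfolding fundamental_domain_def
proof (intro conjI allI impI)
  show "(\<Union>r\<in>R. (+) r ` P) \<in> sets lebesgue"
    using \<open>finite R\<close> fundamental_domain_sets[OF P] by (auto intro: lebesgue_sets_translation)
next
  fix y
  obtain p l where "p \<in> P" "l \<in> L" "y = p + l"
    using fundamental_domain_cover[OF P] by blast
  have "coset_of L0 l \<in> coset_of L0 ` R"
    using bij_betw_imp_surj_on[OF R] \<open>l \<in> L\<close> by (simp add: quotient_cosets_def)
  then obtain r where "r \<in> R" "coset_of L0 l = coset_of L0 r" by blast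
  then have "r + p \<in> (\<Union>r\<in>R. (+) r ` P)" "l - r \<in> L0" "y = (r + p) + (l - r)"
    using \<open>p \<in> P\<close> \<open>y = p + l\<close> coset_of_eq_iff[OF G0] by auto
  then show "\<exists>d\<in>\<Union>r\<in>R. (+) r ` P. \<exists>\<mu>\<in>L0. y = d + \<mu>" by blast
next
  fix d d' \<mu> \<mu>'
  assume "d \<in> (\<Union>r\<in>R. (+) r ` P)" "d' \<in> (\<Union>r\<in>R. (+) r ` P)" and \<mu>: "\<mu> \<in> L0" "\<mu>' \<in> L0"
    and eq: "d + \<mu> = d' + \<mu>'"
  then obtain r r' p p' where rp: "r \<in> R" "r' \<in> R" "p \<in> P" "p' \<in> P" "d = r + p" "d' = r' + p'"
    by blast
  have "r + \<mu> \<in> L" "r' + \<mu>' \<in> L"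
    using rp(1,2) \<mu> \<open>R \<subseteq> L\<close> \<open>L0 \<subseteq> L\<close> by (auto intro: additive_subgroup_add[OF G])
  moreover have "p + (r + \<mu>) = p' + (r' + \<mu>')" using eq rp by (simp add: ac_simps)
  ultimately have "p = p'" by (rule fundamental_domain_unique[OF P rp(3,4)])
  with eq rp have "r - r' = \<mu>' - \<mu>" by (simp add: algebra_simps)
  then have "coset_of L0 r = coset_of L0 r'"
    using coset_of_eq_iff[OF G0] additive_subgroup_diff[OF G0 \<mu>(2,1)] by simp
  then have "r = r'" by (rule inj_onD[OF bij_betw_imp_inj_on[OF R] _ rp(1,2)])
  with rp \<open>p = p'\<close> show "d = d'" by simp
qed

lemma fundamental_domain_sublattice_emeasure:
  fixes L L0 P :: "(real ^ 'n) set"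
  assumes L: "full_rank_lattice L" and L0: "full_rank_lattice L0" and "L0 \<subseteq> L"
    and P: "fundamental_domain L P"
  obtains D0 where "fundamental_domain L0 D0"
    "emeasure lebesgue D0 = of_nat (card (quotient_cosets L L0)) * emeasure lebesgue P"
proof -
  define R where "R = inv_into L (coset_of L0) ` quotient_cosets L L0"
  have "R \<subseteq> L" by (auto simp: R_def quotient_cosets_def inv_into_into)
  have R: "bij_betw (coset_of L0) R (quotient_cosets L L0)"
    unfolding R_def quotient_cosets_def by (smt (verit) bij_betwI' f_inv_into_f image_eqI inv_into_into)
  then have "finite R"
    using finite_quotient_cosets[OF L L0 \<open>L0 \<subseteq> L\<close>] by (simp add: bij_betw_finite)
  show ?thesis
  proof (rule that)
    show "fundamental_domain L0 (\<Union>r\<in>R. (+) r ` P)"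
      using P full_rank_lattice_additive_subgroup[OF L] full_rank_lattice_additive_subgroup[OF L0]
        \<open>L0 \<subseteq> L\<close> \<open>R \<subseteq> L\<close> \<open>finite R\<close> R
      by (rule fundamental_domain_sublattice)
    show "emeasure lebesgue (\<Union>r\<in>R. (+) r ` P) = of_nat (card (quotient_cosets L L0)) * emeasure lebesgue P"
      using emeasure_translates_fundamental_domain[OF P \<open>finite R\<close> \<open>R \<subseteq> L\<close>] bij_betw_same_card[OF R]
      by simp
  qed
qed

lemma coset_of_fibre_eq:
  assumes G: "additive_subgroup L" and G0: "additive_subgroup L0" and "L0 \<subseteq> L" and "a \<in> L"
  shows "{x \<in> L \<inter> S. coset_of L0 x = coset_of L0 a} = coset_of L0 a \<inter> S"
proof -
  have "x \<in> L" if "x - a \<in> L0" for x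
    using additive_subgroup_add[OF G, of "x - a" a] that assms(3,4) by auto
  then show ?thesis by (auto simp: coset_of_eq_iff[OF G0] mem_coset_of_iff)
qed

section \<open>Counting lattice points in a box\<close>

lemma emeasure_lebesgue_cube:
  assumes "lo \<le> hi"
  shows "emeasure lebesgue (cbox (\<chi> i. lo) (\<chi> i. hi) :: (real ^ 'n) set) = ennreal ((hi - lo) ^ CARD('n))"
proof -
  have "cbox (\<chi> i. lo) (\<chi> i. hi :: real ^ 'n) \<noteq> {}"
    using assms by (simp add: interval_eq_empty_cart)
  then have "measure lebesgue (cbox (\<chi> i. lo) (\<chi> i. hi :: real ^ 'n)) = (hi - lo) ^ CARD('n)"
    by (simp add: content_cbox_cart)
  then show ?thesis by (simp add: emeasure_eq_measure2)
qed

lemma emeasure_lebesgue_open_cube: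
  assumes "lo \<le> hi"
  shows "emeasure lebesgue (box (\<chi> i. lo) (\<chi> i. hi) :: (real ^ 'n) set) = ennreal ((hi - lo) ^ CARD('n))"
  using emeasure_lebesgue_cube[OF assms, where 'n='n]
  by (simp add: emeasure_lborel_box_eq emeasure_lborel_cbox_eq)

lemma card_inter_half_open_box_mult_le:
  fixes \<Lambda> W :: "(real ^ 'n) set" and b \<rho> m :: real
  assumes W: "fundamental_domain \<Lambda> W" and "W \<subseteq> cball 0 \<rho>"
    and m: "emeasure lebesgue W = ennreal m" "0 \<le> m" and "0 \<le> \<rho>" and "0 \<le> b"
  shows "card (\<Lambda> \<inter> half_open_box b) * m \<le> (b + 2 * \<rho>) ^ CARD('n)"
proof (cases "finite (\<Lambda> \<inter> half_open_box b)")
  case True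
  have "(\<Union>z\<in>\<Lambda> \<inter> half_open_box b. (+) z ` W) \<subseteq> cbox (\<chi> i. - \<rho>) (\<chi> i. b + \<rho>)"
  proof clarify
    fix z w :: "real ^ 'n" assume "z \<in> half_open_box b" "w \<in> W"
    then have "0 \<le> z $ i" "z $ i < b" "\<bar>w $ i\<bar> \<le> \<rho>" for i :: 'n
      using \<open>W \<subseteq> cball 0 \<rho>\<close>
      by (auto simp: half_open_box_def subset_iff intro!: norm_bound_component_le_cart)
    then have "- \<rho> \<le> (z + w) $ i \<and> (z + w) $ i \<le> b + \<rho>" for i
      by (smt (verit) vector_add_component)
    then show "z + w \<in> cbox (\<chi> i. - \<rho>) (\<chi> i. b + \<rho>)"
      by (simp add: mem_box_cart)
  qed
  then have "emeasure lebesgue (\<Union>z\<in>\<Lambda> \<inter> half_open_box b. (+) z ` W)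
      \<le> emeasure lebesgue (cbox (\<chi> i. - \<rho>) (\<chi> i. b + \<rho>) :: (real ^ 'n) set)"
    by (intro emeasure_mono) auto
  then have "ennreal (card (\<Lambda> \<inter> half_open_box b) * m) \<le> ennreal ((b + 2 * \<rho>) ^ CARD('n))"
    using True emeasure_translates_fundamental_domain[OF W]
      emeasure_lebesgue_cube[of "- \<rho>" "b + \<rho>", where 'n='n] assms
    by (simp add: algebra_simps ennreal_mult'' ennreal_of_nat_eq_real_of_nat)
  then show ?thesis using assms by simp
qed (use assms in simp)

lemma card_coset_inter_half_open_box_mult_ge:
  fixes \<Lambda> W :: "(real ^ 'n) set" and b \<rho> m :: real
  assumes W: "fundamental_domain \<Lambda> W" and "W \<subseteq> cball 0 \<rho>" and "2 * \<rho> \<le> b"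
    and m: "emeasure lebesgue W = ennreal m" "0 \<le> m" and fin: "finite (coset_of \<Lambda> a \<inter> half_open_box b)"
  shows "(b - 2 * \<rho>) ^ CARD('n) \<le> card (coset_of \<Lambda> a \<inter> half_open_box b) * m"
proof -
  have "box (\<chi> i. \<rho>) (\<chi> i. b - \<rho>) \<subseteq> (\<Union>z\<in>coset_of \<Lambda> a \<inter> half_open_box b. (+) z ` W)"
  proof
    fix x :: "real ^ 'n" assume x: "x \<in> box (\<chi> i. \<rho>) (\<chi> i. b - \<rho>)"
    obtain w \<mu> where w: "w \<in> W" "\<mu> \<in> \<Lambda>" "x - a = w + \<mu>"
      using fundamental_domain_cover[OF W] by blast
    have "\<bar>w $ i\<bar> \<le> \<rho>" "\<rho> < x $ i" "x $ i < b - \<rho>" for i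
      using \<open>W \<subseteq> cball 0 \<rho>\<close> w(1) x
      by (auto simp: subset_iff mem_box_cart intro!: norm_bound_component_le_cart)
    then have "0 \<le> (x - w) $ i \<and> (x - w) $ i < b" for i
      by (smt (verit) vector_minus_component)
    then have "x - w \<in> half_open_box b" by (simp add: half_open_box_def)
    moreover have "x - w \<in> coset_of \<Lambda> a"
      using w by (simp add: mem_coset_of_iff algebra_simps)
    ultimately show "x \<in> (\<Union>z\<in>coset_of \<Lambda> a \<inter> half_open_box b. (+) z ` W)"
      using w(1) by (intro UN_I[of "x - w"] image_eqI[of _ _ w]) auto
  qed
  then have "emeasure lebesgue (box (\<chi> i. \<rho>) (\<chi> i. b - \<rho>) :: (real ^ 'n) set)
      \<le> of_nat (card (coset_of \<Lambda> a \<inter> half_open_box b)) * emeasure lebesgue W"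
    using fin fundamental_domain_sets[OF W] by (rule emeasure_le_card_mult_translates)
  then have "ennreal ((b - 2 * \<rho>) ^ CARD('n)) \<le> ennreal (card (coset_of \<Lambda> a \<inter> half_open_box b) * m)"
    using emeasure_lebesgue_open_cube[of \<rho> "b - \<rho>", where 'n='n] assms
    by (simp add: algebra_simps ennreal_mult'' ennreal_of_nat_eq_real_of_nat)
  then show ?thesis using m by simp
qed

lemma sublattice_fundamental_domains_in_cballs:
  fixes L L0 :: "(real ^ 'n) set"
  assumes L: "full_rank_lattice L" and L0: "full_rank_lattice L0" and "L0 \<subseteq> L"
  obtains v :: real and W W0 where "0 < v"
    "fundamental_domain L W" "W \<subseteq> cball 0 (covering_radius L)" "emeasure lebesgue W = ennreal v"
    "fundamental_domain L0 W0" "W0 \<subseteq> cball 0 (covering_radius L0)"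
    "emeasure lebesgue W0 = ennreal (card (quotient_cosets L L0) * v)"
proof -
  obtain P where P: "fundamental_domain L P" "bounded P"
    using full_rank_lattice_bounded_fundamental_domain[OF L] by blast
  define v where "v = measure lebesgue P"
  note v = emeasure_bounded_fundamental_domain[OF P(1) countable_full_rank_lattice[OF L] P(2), folded v_def]
  obtain W where W: "fundamental_domain L W" "W \<subseteq> cball 0 (covering_radius L)" "emeasure lebesgue W = ennreal v"
    using fundamental_domain_in_cball[OF P(1) full_rank_lattice_additive_subgroup[OF L]
        countable_full_rank_lattice[OF L] covering_radius_nearest[OF L]]
    unfolding v(1) by blast
  obtain D0 where D0: "fundamental_domain L0 D0"
    "emeasure lebesgue D0 = ennreal (card (quotient_cosets L L0) * v)"
    using fundamental_domain_sublattice_emeasure[OF L L0 \<open>L0 \<subseteq> L\<close> P(1)] v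
    by (metis ennreal_mult'' ennreal_of_nat_eq_real_of_nat less_imp_le)
  obtain W0 where W0: "fundamental_domain L0 W0" "W0 \<subseteq> cball 0 (covering_radius L0)"
    "emeasure lebesgue W0 = ennreal (card (quotient_cosets L L0) * v)"
    using fundamental_domain_in_cball[OF D0(1) full_rank_lattice_additive_subgroup[OF L0]
        countable_full_rank_lattice[OF L0] covering_radius_nearest[OF L0]]
    unfolding D0(2) by blast
  show ?thesis by (rule that[OF v(2) W W0])
qed

lemma lattice_point_count_bounds:
  fixes L L0 :: "(real ^ 'n) set" and b :: real
  assumes L: "full_rank_lattice L" and L0: "full_rank_lattice L0" and "L0 \<subseteq> L"
    and b: "2 * covering_radius L0 \<le> b"
  obtains v :: real where "0 < v"
    "card (L \<inter> half_open_box b) * v \<le> (b + 2 * covering_radius L) ^ CARD('n)"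
    "\<And>a. a \<in> L \<Longrightarrow> (b - 2 * covering_radius L0) ^ CARD('n)
        \<le> card (coset_of L0 a \<inter> half_open_box b) * (card (quotient_cosets L L0) * v)"
proof -
  obtain v :: real and W W0 where "0 < v"
    and W: "fundamental_domain L W" "W \<subseteq> cball 0 (covering_radius L)" "emeasure lebesgue W = ennreal v"
    and W0: "fundamental_domain L0 W0" "W0 \<subseteq> cball 0 (covering_radius L0)"
      "emeasure lebesgue W0 = ennreal (card (quotient_cosets L L0) * v)"
    using sublattice_fundamental_domains_in_cballs[OF L L0 \<open>L0 \<subseteq> L\<close>] .
  have "0 \<le> covering_radius L" "0 \<le> covering_radius L0"
    using covering_radius_nonneg L L0 by blast+
  show ?thesis
  proof (rule that[OF \<open>0 < v\<close>])
    show "card (L \<inter> half_open_box b) * v \<le> (b + 2 * covering_radius L) ^ CARD('n)"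
      using card_inter_half_open_box_mult_le[OF W] \<open>0 < v\<close> \<open>0 \<le> covering_radius L\<close>
        \<open>0 \<le> covering_radius L0\<close> b by simp
  next
    fix a assume "a \<in> L"
    have "coset_of L0 a \<inter> half_open_box b \<subseteq> L \<inter> half_open_box b"
      using coset_of_fibre_eq[OF full_rank_lattice_additive_subgroup[OF L]
          full_rank_lattice_additive_subgroup[OF L0] \<open>L0 \<subseteq> L\<close> \<open>a \<in> L\<close>] by blast
    then have "finite (coset_of L0 a \<inter> half_open_box b)"
      using finite_full_rank_lattice_inter_bounded[OF L bounded_half_open_box] by (rule finite_subset)
    then show "(b - 2 * covering_radius L0) ^ CARD('n)
        \<le> card (coset_of L0 a \<inter> half_open_box b) * (card (quotient_cosets L L0) * v)"
      using card_coset_inter_half_open_box_mult_ge[OF W0(1,2) b W0(3)] \<open>0 < v\<close> by simp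
  qed
qed

section \<open>The distribution of the sampled coset\<close>

lemma pmf_map_pmf_of_set:
  assumes "finite X" and "X \<noteq> {}"
  shows "pmf (map_pmf f (pmf_of_set X)) c = card {x \<in> X. f x = c} / card X"
proof -
  have "X \<inter> f -` {c} = {x \<in> X. f x = c}" by auto
  then show ?thesis using assms by (simp add: pmf_map measure_pmf_of_set)
qed

lemma tv_dist_pmf_of_set_le:
  assumes "finite Q" and "Q \<noteq> {}" and "set_pmf p \<subseteq> Q" and "r \<le> 1"
    and lower: "\<And>c. c \<in> Q \<Longrightarrow> r / card Q \<le> pmf p c"
  shows "tv_dist p (pmf_of_set Q) \<le> 1 - r"
proof -
  define q where "q = pmf_of_set Q"
  have "card Q > 0" using assms by (simp add: card_gt_0_iff)
  have below: "measure_pmf.prob q A - measure_pmf.prob p A \<le> 1 - r" for A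
  proof -
    have "measure_pmf.prob p A = measure_pmf.prob p (A \<inter> Q)"
      using assms(3) by (metis inf.absorb_iff2 inf_assoc measure_Int_set_pmf)
    also have "\<dots> = (\<Sum>c\<in>A \<inter> Q. pmf p c)"
      using assms(1) by (simp add: measure_measure_pmf_finite)
    finally have "measure_pmf.prob p A = (\<Sum>c\<in>A \<inter> Q. pmf p c)" .
    moreover have "measure_pmf.prob q A = (\<Sum>c\<in>A \<inter> Q. 1 / card Q)"
      using assms(1,2) by (simp add: q_def measure_pmf_of_set Int_commute)
    ultimately have "measure_pmf.prob q A - measure_pmf.prob p A = (\<Sum>c\<in>A \<inter> Q. 1 / card Q - pmf p c)"
      by (simp add: sum_subtractf)
    also have "\<dots> \<le> (\<Sum>c\<in>A \<inter> Q. (1 - r) / card Q)"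
      using lower by (intro sum_mono) (simp add: diff_divide_distrib)
    also have "\<dots> = card (A \<inter> Q) * ((1 - r) / card Q)" by simp
    also have "\<dots> \<le> card Q * ((1 - r) / card Q)"
      using assms(1,4) by (intro mult_right_mono) (simp_all add: card_mono)
    finally show ?thesis using \<open>card Q > 0\<close> by simp
  qed
  have "measure_pmf.prob p A - measure_pmf.prob q A \<le> 1 - r" for A
    using below[of "UNIV - A"] measure_pmf.prob_compl[of A p] measure_pmf.prob_compl[of A q] by simp
  with below show ?thesis
    unfolding tv_dist_def q_def[symmetric] by (intro cSUP_least) (auto simp: abs_le_iff)
qed

lemma pmf_coset_of_half_open_box_ge:
  fixes L L0 :: "(real ^ 'n) set" and b :: real
  assumes L: "full_rank_lattice L" and L0: "full_rank_lattice L0" and "L0 \<subseteq> L"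
    and b: "2 * covering_radius L0 < b" and c: "c \<in> quotient_cosets L L0"
  shows "(b - 2 * covering_radius L0) ^ CARD('n) / (b + 2 * covering_radius L) ^ CARD('n)
      / card (quotient_cosets L L0) \<le> pmf (map_pmf (coset_of L0) (pmf_of_set (L \<inter> half_open_box b))) c"
proof -
  obtain v :: real where "0 < v"
    and upper: "card (L \<inter> half_open_box b) * v \<le> (b + 2 * covering_radius L) ^ CARD('n)"
    and lower: "\<And>a. a \<in> L \<Longrightarrow> (b - 2 * covering_radius L0) ^ CARD('n)
        \<le> card (coset_of L0 a \<inter> half_open_box b) * (card (quotient_cosets L L0) * v)"
    using lattice_point_count_bounds[OF L L0 \<open>L0 \<subseteq> L\<close> less_imp_le[OF b]] by blast
  define X k A C where "X = L \<inter> half_open_box b" and "k = card (quotient_cosets L L0)"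
    and "A = (b - 2 * covering_radius L0) ^ CARD('n)" and "C = (b + 2 * covering_radius L) ^ CARD('n)"
  note upper = upper[folded X_def C_def] and lower = lower[folded k_def A_def]
  obtain a where "a \<in> L" and c_eq: "c = coset_of L0 a" using c by (auto simp: quotient_cosets_def)
  define F where "F = real (card (coset_of L0 a \<inter> half_open_box b))"
  have "finite X"
    using finite_full_rank_lattice_inter_bounded[OF L bounded_half_open_box] by (simp add: X_def)
  have "X \<noteq> {}"
    using full_rank_lattice_inter_half_open_box_nonempty[OF L] b covering_radius_nonneg[OF L0]
    by (simp add: X_def)
  then have "0 < card X"
    using \<open>finite X\<close> by (simp add: card_gt_0_iff)
  have "0 < k"
    using finite_quotient_cosets[OF L L0 \<open>L0 \<subseteq> L\<close>] c unfolding k_def by (auto simp: card_gt_0_iff)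
  have "0 < C" using b covering_radius_nonneg[OF L] covering_radius_nonneg[OF L0] by (simp add: C_def)
  have "A / C / k \<le> F * (k * v) / C / k"
    using lower[OF \<open>a \<in> L\<close>] \<open>0 < C\<close> unfolding F_def by (intro divide_right_mono) auto
  also have "\<dots> = F * v / C"
    using \<open>0 < k\<close> by simp
  also have "\<dots> \<le> F * v / (card X * v)"
    using upper \<open>0 < v\<close> \<open>0 < C\<close> \<open>0 < card X\<close> by (intro divide_left_mono) (simp_all add: F_def)
  also have "\<dots> = F / card X"
    using \<open>0 < v\<close> by simp
  also have "\<dots> = pmf (map_pmf (coset_of L0) (pmf_of_set X)) c"
    using coset_of_fibre_eq[OF full_rank_lattice_additive_subgroup[OF L]
        full_rank_lattice_additive_subgroup[OF L0] \<open>L0 \<subseteq> L\<close> \<open>a \<in> L\<close>, of "half_open_box b"]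
      pmf_map_pmf_of_set[OF \<open>finite X\<close> \<open>X \<noteq> {}\<close>, of "coset_of L0" c]
    by (simp add: F_def X_def c_eq)
  finally show ?thesis unfolding A_def C_def X_def k_def .
qed

theorem lemma7p5:
  fixes L L0 :: "(real ^ 'n) set" and b0 :: real
  assumes "full_rank_lattice L"
    and "full_rank_lattice L0"
    and "L0 \<subseteq> L"
    and "b0 > 2 * covering_radius L0"
  shows "tv_dist (map_pmf (coset_of L0) (pmf_of_set (L \<inter> half_open_box b0)))
                 (pmf_of_set (quotient_cosets L L0))
         \<le> 1 - (b0 - 2 * covering_radius L0) ^ CARD('n) / (b0 + 2 * covering_radius L) ^ CARD('n)"
proof (rule tv_dist_pmf_of_set_le)
  have "L \<inter> half_open_box b0 \<noteq> {}"
    using full_rank_lattice_inter_half_open_box_nonempty[OF assms(1)] assms(4)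
      covering_radius_nonneg[OF assms(2)] by simp
  then show "quotient_cosets L L0 \<noteq> {}" by (auto simp: quotient_cosets_def)
  show "finite (quotient_cosets L L0)"
    using finite_quotient_cosets[OF assms(1-3)] .
  show "set_pmf (map_pmf (coset_of L0) (pmf_of_set (L \<inter> half_open_box b0))) \<subseteq> quotient_cosets L L0"
    using finite_full_rank_lattice_inter_bounded[OF assms(1) bounded_half_open_box]
      \<open>L \<inter> half_open_box b0 \<noteq> {}\<close> by (auto simp: quotient_cosets_def)
  show "(b0 - 2 * covering_radius L0) ^ CARD('n) / (b0 + 2 * covering_radius L) ^ CARD('n) \<le> 1"
    using assms(4) covering_radius_nonneg[OF assms(1)] covering_radius_nonneg[OF assms(2)]
    by (simp add: power_mono)
qed (rule pmf_coset_of_half_open_box_ge[OF assms])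

end
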